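(* Let $G$ be a graph with vertices labelled $1,\dots,n$, let $A$ be an $\mathrm{Aut}\,G$-invariant normal subgroup of $\mathbb{Z}_2^{*V(G)}$, and let $\Gamma=\mathbb{Z}_2^{*V(G)}/A$. Then there exists a skew graph category $\mathscr{C}$ such that $\mathscr{C}^G$ is the representation category of the quantum group $\mathbb{G}=\hat\Gamma\rtimes\mathrm{Aut}\,G$, i.e. $\mathscr{C}^G(k,l)=\mathrm{Mor}(u^{\otimes k},u^{\otimes l})$ for all $k,l\in\mathbb{N}_0$, where $u$ is the fundamental representation of $\mathbb{G}$.
   Context: Graphs are finite, undirected, without multiple edges, loops allowed, up to isomorphism; $N_k$ is the edgeless graph on $k$ vertices; graph homomorphisms map edges (including loops) to edges. $\mathbb{Z}_2^{*V}$ is the group generated by the set $V$ subject to $v^2=e$; automorphisms of $G$ act on $\mathbb{Z}_2^{*V(G)}$ by permuting generators. A vertex overlap of graphs $K,H$ is a subset $f\subset V(K)\times V(H)$ in which each vertex occurs at most once; $K\cup_fH$ is the quotient of $K\sqcup H$ identifying $v$ with $w$ for $(v,w)\in f$, with induced maps $f_K,f_H$. A bilabelled graph is $(K,\mathbf{a},\mathbf{b})$ with $\mathbf{a}\in V(K)^k$, $\mathbf{b}\in V(K)^l$, up to isomorphism preserving tuples; $\mathscr{C}(k,l)$ those with $k$ inputs, $l$ outputs. A skew graph category is a set of bilabelled graphs containing $(N_0,\emptyset,\emptyset)$, $(M,(v),(v))$, $(M,\emptyset,(v,v))$ ($M$ the one-vertex loopless graph with vertex $v$), closed under all $f$-unions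 $(K,\mathbf{a},\mathbf{b})\cup_f(H,\mathbf{c},\mathbf{d})=(K\cup_fH,f_K(\mathbf{a})f_H(\mathbf{c}),f_K(\mathbf{b})f_H(\mathbf{d}))$, under involution $(K,\mathbf{a},\mathbf{b})\mapsto(K,\mathbf{b},\mathbf{a})$, and under compositions $(H,\mathbf{c},\mathbf{d})\cdot(K,\mathbf{a},\mathbf{b})=(H\cdot K,\mathbf{a},\mathbf{d})$ ($H\cdot K$ the quotient of $K\sqcup H$ identifying $b_i$ with $c_i$) whenever $\mathbf{b}$ and $\mathbf{c}$ have the same pattern of equal entries. $\hat T^G_{(K,\mathbf{a},\mathbf{b})}\colon(\mathbb{C}^n)^{\otimes k}\to(\mathbb{C}^n)^{\otimes l}$ has $(\mathbf{j},\mathbf{i})$-entry $\#\{\phi\colon K\to G\text{ injective homomorphism}\mid\phi(\mathbf{a})=\mathbf{i},\phi(\mathbf{b})=\mathbf{j}\}$ and $\mathscr{C}^G(k,l)=\mathrm{span}\{\hat T^G_{\mathbf{K}}\mid\mathbf{K}\in\mathscr{C}(k,l)\}$. Quantum groups: for an orthogonal compact matrix quantum group $(O(\mathbb{G}),u)$, $\mathrm{Mor}(u^{\otimes k},u^{\otimes l})=\{T\colon(\mathbb{C}^n)^{\otimes k}\to(\mathbb{C}^n)^{\otimes l}\mid Tu^{\otimes k}=u^{\otimes l}T\}$. A permutation group $H\subset S_n$ is the quantum group $(O(H),v)$ with $v_{ij}(\sigma)=\delta_{i\sigma(j)}$; $\mathrm{Aut}\,G\subset S_n$ via the labelling. For $\Gamma$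 a quotient of $\mathbb{Z}_2^{*n}$ by an $H$-invariant normal subgroup, with $\gamma_i\in\mathbb{C}\Gamma$ the images of the generators, $\hat\Gamma\rtimes H$ is $(\mathbb{C}\Gamma\otimes O(H),u)$ with $u_{ij}=\gamma_i\otimes v_{ij}$. *)

theory Defs
  imports Complex_Main "HOL-Library.FuncSet" "HOL-Combinatorics.Permutations"
begin

text \<open>Edges are a symmetric set of ordered pairs; a pair (x,x) is a loop.
  Sets of bilabelled graphs "up to isomorphism" are represented by isomorphism-closed sets.\<close>

record blg =
  bverts :: "nat set"
  bedges :: "(nat \<times> nat) set"
  bin    :: "nat list"
  bout   :: "nat list"

definition wf_blg :: "blg \<Rightarrow> bool" where
  "wf_blg K \<longleftrightarrow> finite (bverts K) \<and> bedges K \<subseteq> bverts K \<times> bverts K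
     \<and> sym (bedges K) \<and> set (bin K) \<subseteq> bverts K \<and> set (bout K) \<subseteq> bverts K"

definition blg_iso :: "blg \<Rightarrow> blg \<Rightarrow> bool" where
  "blg_iso K L \<longleftrightarrow> (\<exists>\<phi>. bij_betw \<phi> (bverts K) (bverts L)
     \<and> (\<forall>x\<in>bverts K. \<forall>y\<in>bverts K. (x, y) \<in> bedges K \<longleftrightarrow> (\<phi> x, \<phi> y) \<in> bedges L)
     \<and> map \<phi> (bin K) = bin L \<and> map \<phi> (bout K) = bout L)"

definition blg_N0 :: blg where
  "blg_N0 = \<lparr>bverts = {}, bedges = {}, bin = [], bout = []\<rparr>"

definition blg_M_id :: blg where
  "blg_M_id = \<lparr>bverts = {0}, bedges = {}, bin = [0], bout = [0]\<rparr>"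

definition blg_M_cup :: blg where
  "blg_M_cup = \<lparr>bverts = {0}, bedges = {}, bin = [], bout = [0, 0]\<rparr>"

definition blg_inv :: "blg \<Rightarrow> blg" where
  "blg_inv K = \<lparr>bverts = bverts K, bedges = bedges K, bin = bout K, bout = bin K\<rparr>"

definition vertex_overlap :: "blg \<Rightarrow> blg \<Rightarrow> (nat \<times> nat) set \<Rightarrow> bool" where
  "vertex_overlap K H f \<longleftrightarrow> f \<subseteq> bverts K \<times> bverts H
     \<and> (\<forall>(a, b)\<in>f. \<forall>(c, d)\<in>f. (a = c \<longleftrightarrow> b = d))"

text \<open>Concrete model of the quotient of the disjoint union: vertex x of K becomes 2x,
  vertex y of H becomes 2y+1 unless it is identified with a vertex of K.\<close>
definition union_mapH :: "(nat \<times> nat) set \<Rightarrow> nat \<Rightarrow> nat" where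
  "union_mapH f y = (if \<exists>x. (x, y) \<in> f then 2 * (SOME x. (x, y) \<in> f) else 2 * y + 1)"

definition pmap :: "(nat \<Rightarrow> nat) \<Rightarrow> (nat \<times> nat) set \<Rightarrow> (nat \<times> nat) set" where
  "pmap g E = (\<lambda>(x, y). (g x, g y)) ` E"

definition blg_union :: "blg \<Rightarrow> (nat \<times> nat) set \<Rightarrow> blg \<Rightarrow> blg" where
  "blg_union K f H =
     \<lparr>bverts = (\<lambda>x. 2 * x) ` bverts K \<union> union_mapH f ` bverts H,
      bedges = pmap (\<lambda>x. 2 * x) (bedges K) \<union> pmap (union_mapH f) (bedges H),
      bin = map (\<lambda>x. 2 * x) (bin K) @ map (union_mapH f) (bin H),
      bout = map (\<lambda>x. 2 * x) (bout K) @ map (union_mapH f) (bout H)\<rparr>"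

definition same_pattern :: "nat list \<Rightarrow> nat list \<Rightarrow> bool" where
  "same_pattern b c \<longleftrightarrow> length b = length c
     \<and> (\<forall>i<length b. \<forall>j<length b. b ! i = b ! j \<longleftrightarrow> c ! i = c ! j)"

text \<open>Composition (H,c,d) \<cdot> (K,a,b) = (H\<cdot>K, a, d): identify c_i (of H) with b_i (of K).\<close>
definition comp_mapH :: "blg \<Rightarrow> blg \<Rightarrow> nat \<Rightarrow> nat" where
  "comp_mapH H K y = (if y \<in> set (bin H)
     then 2 * (bout K ! (SOME i. i < length (bin H) \<and> bin H ! i = y)) else 2 * y + 1)"

definition blg_comp :: "blg \<Rightarrow> blg \<Rightarrow> blg" where
  "blg_comp H K =
     \<lparr>bverts = (\<lambda>x. 2 * x) ` bverts K \<union> comp_mapH H K ` bverts H,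
      bedges = pmap (\<lambda>x. 2 * x) (bedges K) \<union> pmap (comp_mapH H K) (bedges H),
      bin = map (\<lambda>x. 2 * x) (bin K),
      bout = map (comp_mapH H K) (bout H)\<rparr>"

definition skew_graph_category :: "blg set \<Rightarrow> bool" where
  "skew_graph_category C \<longleftrightarrow>
     (\<forall>K\<in>C. wf_blg K)
   \<and> (\<forall>K\<in>C. \<forall>L. wf_blg L \<and> blg_iso K L \<longrightarrow> L \<in> C)
   \<and> blg_N0 \<in> C \<and> blg_M_id \<in> C \<and> blg_M_cup \<in> C
   \<and> (\<forall>K\<in>C. \<forall>H\<in>C. \<forall>f. vertex_overlap K H f \<longrightarrow> blg_union K f H \<in> C)
   \<and> (\<forall>K\<in>C. blg_inv K \<in> C)
   \<and> (\<forall>K\<in>C. \<forall>H\<in>C. same_pattern (bout K) (bin H) \<longrightarrow> blg_comp H K \<in> C)"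

text \<open>G: vertex set {..<n} (labels 1..n shifted to 0..n-1), edge set EG, symmetric,
  loops allowed. Linear maps (C^n)^{\<otimes>k} \<rightarrow> (C^n)^{\<otimes>l} are matrices indexed by
  (output multi-index j, input multi-index i), zero outside the index range.\<close>

definition tuples :: "nat \<Rightarrow> nat \<Rightarrow> nat list set" where
  "tuples n k = {xs. length xs = k \<and> set xs \<subseteq> {..<n}}"

type_synonym mat = "nat list \<Rightarrow> nat list \<Rightarrow> complex"

definition is_map :: "nat \<Rightarrow> nat \<Rightarrow> nat \<Rightarrow> mat \<Rightarrow> bool" where
  "is_map n k l T \<longleftrightarrow> (\<forall>j i. T j i \<noteq> 0 \<longrightarrow> j \<in> tuples n l \<and> i \<in> tuples n k)"

definition hatT :: "nat \<Rightarrow> (nat \<times> nat) set \<Rightarrow> blg \<Rightarrow> mat" where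
  "hatT n EG K = (\<lambda>j i. of_nat (card {\<phi> \<in> bverts K \<rightarrow>\<^sub>E {..<n}.
       inj_on \<phi> (bverts K) \<and> (\<forall>(x, y)\<in>bedges K. (\<phi> x, \<phi> y) \<in> EG)
       \<and> map \<phi> (bin K) = i \<and> map \<phi> (bout K) = j}))"

definition cspan :: "mat set \<Rightarrow> mat set" where
  "cspan S = {T. \<exists>F c. finite F \<and> F \<subseteq> S \<and> T = (\<lambda>j i. \<Sum>X\<in>F. c X * X j i)}"

definition graphC :: "nat \<Rightarrow> (nat \<times> nat) set \<Rightarrow> blg set \<Rightarrow> nat \<Rightarrow> nat \<Rightarrow> mat set" where
  "graphC n EG C k l = cspan {hatT n EG K | K. K \<in> C \<and> length (bin K) = k \<and> length (bout K) = l}"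

definition AutG :: "nat \<Rightarrow> (nat \<times> nat) set \<Rightarrow> (nat \<Rightarrow> nat) set" where
  "AutG n EG = {\<sigma>. \<sigma> permutes {..<n} \<and> (\<forall>x y. (x, y) \<in> EG \<longleftrightarrow> (\<sigma> x, \<sigma> y) \<in> EG)}"

fun red :: "nat list \<Rightarrow> nat list" where
  "red [] = []"
| "red (x # xs) = (case red xs of [] \<Rightarrow> [x] | y # ys \<Rightarrow> (if x = y then ys else x # y # ys))"

definition reduced :: "nat \<Rightarrow> nat list \<Rightarrow> bool" where
  "reduced n w \<longleftrightarrow> set w \<subseteq> {..<n} \<and> (\<forall>i. Suc i < length w \<longrightarrow> w ! i \<noteq> w ! Suc i)"

text \<open>Elements of Z_2^{*n} are reduced words; product = reduced concatenation, inverse = reversal.\<close>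
definition wmul :: "nat list \<Rightarrow> nat list \<Rightarrow> nat list" where
  "wmul v w = red (v @ w)"

definition normal_subgroup_Z2 :: "nat \<Rightarrow> nat list set \<Rightarrow> bool" where
  "normal_subgroup_Z2 n A \<longleftrightarrow> A \<subseteq> {w. reduced n w} \<and> [] \<in> A
     \<and> (\<forall>v\<in>A. \<forall>w\<in>A. wmul v w \<in> A) \<and> (\<forall>w\<in>A. rev w \<in> A)
     \<and> (\<forall>g. reduced n g \<longrightarrow> (\<forall>w\<in>A. wmul (wmul g w) (rev g) \<in> A))"

definition invariant_under :: "(nat \<Rightarrow> nat) set \<Rightarrow> nat list set \<Rightarrow> bool" where
  "invariant_under H A \<longleftrightarrow> (\<forall>\<sigma>\<in>H. \<forall>w\<in>A. map \<sigma> w \<in> A)"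

text \<open>Elements of \<Gamma> = Z_2^{*n}/A are the cosets (sets of reduced words); the coset of a word w.\<close>
definition gcls :: "nat \<Rightarrow> nat list set \<Rightarrow> nat list \<Rightarrow> nat list set" where
  "gcls n A w = {v. reduced n v \<and> red (v @ rev w) \<in> A}"

definition cmul :: "nat \<Rightarrow> nat list set \<Rightarrow> nat list set \<Rightarrow> nat list set \<Rightarrow> nat list set" where
  "cmul n A c1 c2 = gcls n A ((SOME w. w \<in> c1) @ (SOME w. w \<in> c2))"

text \<open>Group algebra C\<Gamma>: finitely supported functions on \<Gamma>, with convolution product.\<close>
type_synonym galg = "nat list set \<Rightarrow> complex"

definition ga_delta :: "nat list set \<Rightarrow> galg" where
  "ga_delta c = (\<lambda>d. if d = c then 1 else 0)"

definition ga_mul :: "nat \<Rightarrow> nat list set \<Rightarrow> galg \<Rightarrow> galg \<Rightarrow> galg" where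
  "ga_mul n A f g = (\<lambda>c. \<Sum>p\<in>{p \<in> {d. f d \<noteq> 0} \<times> {d. g d \<noteq> 0}. cmul n A (fst p) (snd p) = c}.
                          f (fst p) * g (snd p))"

text \<open>C\<Gamma> \<otimes> O(H) realised as functions H \<rightarrow> C\<Gamma> (only values on H matter);
  product is pointwise in \<sigma> and convolution in \<Gamma>.\<close>
type_synonym qalg = "(nat \<Rightarrow> nat) \<Rightarrow> galg"

definition qa_mul :: "nat \<Rightarrow> nat list set \<Rightarrow> qalg \<Rightarrow> qalg \<Rightarrow> qalg" where
  "qa_mul n A X Y = (\<lambda>\<sigma>. ga_mul n A (X \<sigma>) (Y \<sigma>))"

definition qa_one :: "nat \<Rightarrow> nat list set \<Rightarrow> qalg" where
  "qa_one n A = (\<lambda>\<sigma>. ga_delta (gcls n A []))"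

text \<open>Fundamental representation u_ij = \<gamma>_i \<otimes> v_ij with v_ij(\<sigma>) = \<delta>_{i,\<sigma>(j)}.\<close>
definition ufund :: "nat \<Rightarrow> nat list set \<Rightarrow> nat \<Rightarrow> nat \<Rightarrow> qalg" where
  "ufund n A i j = (\<lambda>\<sigma>. if i = \<sigma> j then ga_delta (gcls n A [i]) else (\<lambda>_. 0))"

fun utens :: "nat \<Rightarrow> nat list set \<Rightarrow> nat list \<Rightarrow> nat list \<Rightarrow> qalg" where
  "utens n A (p # ps) (i # is) = qa_mul n A (ufund n A p i) (utens n A ps is)"
| "utens n A _ _ = qa_one n A"

text \<open>Mor(u^{\<otimes>k}, u^{\<otimes>l}) = {T | T u^{\<otimes>k} = u^{\<otimes>l} T} in M(C\<Gamma> \<otimes> O(H)).\<close>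
definition Mor :: "nat \<Rightarrow> nat list set \<Rightarrow> (nat \<Rightarrow> nat) set \<Rightarrow> nat \<Rightarrow> nat \<Rightarrow> mat set" where
  "Mor n A H k l = {T. is_map n k l T \<and>
     (\<forall>\<sigma>\<in>H. \<forall>j\<in>tuples n l. \<forall>i\<in>tuples n k.
        (\<lambda>c. \<Sum>p\<in>tuples n k. T j p * utens n A p i \<sigma> c)
      = (\<lambda>c. \<Sum>q\<in>tuples n l. utens n A j q \<sigma> c * T q i))}"

end

theory Submission
  imports Defs
begin

text \<open>
  The category is the class of bilabelled graphs $(K, a, b)$ such that every injective
  homomorphism $\phi \colon K \to G$ sends $a$ and $b$ to words with the same image in
  $\Gamma$. These conditions pull back along the maps of $K$ and $H$ into a union or a
  composition, and equal images multiply and compose, so the class is a skew graph category.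

  Evaluating the intertwiner equation entrywise shows that $T$ lies in
  $\mathrm{Mor}(u^{\otimes k}, u^{\otimes l})$ iff $T$ is $\mathrm{Aut}\,G$-invariant and
  $T_{j,i} \neq 0$ only when $i$ and $j$ have the same image in $\Gamma$. Every
  $\hat T_K$ with $K$ in the class has both properties. Conversely, an injective
  endomorphism of the finite graph $G$ is an automorphism, so $\hat T$ of $G$ itself,
  labelled by $(i, j)$, is a multiple of the indicator of the $\mathrm{Aut}\,G$-orbit of
  $(j, i)$; invariance of $A$ under $\mathrm{Aut}\,G$ puts this labelled graph in the
  class whenever $i$ and $j$ have the same image, and averaging over orbits writes every
  invariant $T$ as a combination of these maps.
\<close>

section \<open>Free reduction in $\mathbb{Z}_2^{*n}$\<close>

definition cancel_cons :: "nat \<Rightarrow> nat list \<Rightarrow> nat list" where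
  "cancel_cons x w = (case w of [] \<Rightarrow> [x] | y # ys \<Rightarrow> (if x = y then ys else x # y # ys))"

lemma cancel_cons_simps [simp]:
  "cancel_cons x [] = [x]"
  "cancel_cons x (y # ys) = (if x = y then ys else x # y # ys)"
  by (simp_all add: cancel_cons_def)

lemma red_Cons: "red (x # xs) = cancel_cons x (red xs)"
  by (simp add: cancel_cons_def)

declare red.simps(2)[simp del]

lemma distinct_adj_cancel_cons: "distinct_adj w \<Longrightarrow> distinct_adj (cancel_cons x w)"
  by (cases w) (auto simp: distinct_adj_Cons)

lemma distinct_adj_red: "distinct_adj (red w)"
  by (induction w) (auto simp: red_Cons distinct_adj_cancel_cons)

lemma red_distinct_adj: "distinct_adj w \<Longrightarrow> red w = w"
  by (induction w rule: remdups_adj.induct) (auto simp: red_Cons)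

lemma red_red [simp]: "red (red w) = red w"
  by (simp add: distinct_adj_red red_distinct_adj)

lemma reduced_iff_distinct_adj: "reduced n w \<longleftrightarrow> set w \<subseteq> {..<n} \<and> distinct_adj w"
  by (auto simp: reduced_def distinct_adj_conv_nth)

lemma cancel_cons_cancel_cons: "distinct_adj w \<Longrightarrow> cancel_cons x (cancel_cons x w) = w"
  by (cases w rule: remdups_adj.cases) (auto simp: distinct_adj_Cons)

lemma red_append_red_right [simp]: "red (u @ red v) = red (u @ v)"
  by (induction u) (auto simp: red_Cons)

lemma red_cancel_cons_append:
  "distinct_adj w \<Longrightarrow> red (cancel_cons x w @ v) = cancel_cons x (red (w @ v))"
  by (cases w) (auto simp: red_Cons cancel_cons_cancel_cons distinct_adj_red)

lemma red_append_red_left [simp]: "red (red u @ v) = red (u @ v)"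
  by (induction u) (auto simp: red_Cons red_cancel_cons_append distinct_adj_red)

lemma red_append_rev_self [simp]: "red (w @ rev w) = []"
proof (induction w)
  case (Cons x w)
  have "red ((w @ rev w) @ [x]) = red (red (w @ rev w) @ [x])"
    by (simp only: red_append_red_left)
  also have "\<dots> = [x]"
    by (simp only: Cons.IH) (simp add: red_Cons)
  finally have "red ((w @ rev w) @ [x]) = [x]" .
  then show ?case by (simp add: red_Cons)
qed simp

lemma red_rev_append_self [simp]: "red (rev w @ w) = []"
  using red_append_rev_self[of "rev w"] by simp

lemma red_rev_red: "red (rev (red u)) = red (rev u)"
proof -
  have "red (rev (red u)) = red (red (rev u @ u) @ rev (red u))"
    by simp
  also have "\<dots> = red (rev u @ red (red u @ rev (red u)))"
    by (simp only: red_append_red_left red_append_red_right append_assoc)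
  finally show ?thesis by simp
qed

lemma red_append_cancel: "red (u @ rev v @ v @ w) = red (u @ w)"
proof -
  have "red (u @ rev v @ v @ w) = red (u @ red (red (rev v @ v) @ w))"
    by (simp only: red_append_red_left red_append_red_right append_assoc)
  then show ?thesis
    by simp
qed

lemma set_red_subset: "set (red w) \<subseteq> set w"
proof (induction w)
  case (Cons x w)
  then show ?case
    by (cases "red w") (auto simp: red_Cons split: if_splits)
qed simp

lemma red_map_inj: "inj f \<Longrightarrow> red (map f w) = map f (red w)"
proof (induction w)
  case (Cons x w)
  then show ?case
    by (cases "red w") (auto simp: red_Cons inj_eq)
qed simp

section \<open>Intertwiners of $\hat\Gamma \rtimes H$\<close>

lemma finite_tuples: "finite (tuples n k)"
  using finite_lists_length_eq[of "{..<n}" k] by (simp add: tuples_def conj_commute)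

lemma set_subset_if_in_tuples: "x \<in> tuples n k \<Longrightarrow> set x \<subseteq> {..<n}"
  by (simp add: tuples_def)

lemma map_permutes_in_tuples_iff:
  "\<sigma> permutes {..<n} \<Longrightarrow> map \<sigma> x \<in> tuples n k \<longleftrightarrow> x \<in> tuples n k"
  using permutes_in_image[of \<sigma> "{..<n}"] by (auto simp: tuples_def)

lemma map_permutes_eq_iff:
  assumes "\<sigma> permutes S"
  shows "map \<sigma> u = v \<longleftrightarrow> u = map (inv \<sigma>) v"
proof -
  have "map (inv \<sigma>) (map \<sigma> u) = u" "map \<sigma> (map (inv \<sigma>) v) = v"
    using permutes_inv_o[OF assms] by simp_all
  then show ?thesis
    by metis
qed

definition same_coset :: "nat list set \<Rightarrow> nat list \<Rightarrow> nat list \<Rightarrow> bool" where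
  "same_coset A x y \<longleftrightarrow> red (x @ rev y) \<in> A"

locale Z2_quotient =
  fixes n :: nat and A :: "nat list set"
  assumes normal: "normal_subgroup_Z2 n A"
begin

lemma red_eq_if_in_A: "a \<in> A \<Longrightarrow> red a = a"
  using normal by (auto simp: normal_subgroup_Z2_def reduced_iff_distinct_adj red_distinct_adj)

lemma Nil_in_A: "[] \<in> A"
  using normal by (simp add: normal_subgroup_Z2_def)

lemma red_append_in_A: "red u \<in> A \<Longrightarrow> red v \<in> A \<Longrightarrow> red (u @ v) \<in> A"
  using normal unfolding normal_subgroup_Z2_def wmul_def
  by (metis red_append_red_left red_append_red_right)

lemma red_rev_in_A: "red u \<in> A \<Longrightarrow> red (rev u) \<in> A"
  using normal red_eq_if_in_A red_rev_red unfolding normal_subgroup_Z2_def by metis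

lemma red_conj_in_A:
  assumes g: "set g \<subseteq> {..<n}" and u: "red u \<in> A"
  shows "red (g @ u @ rev g) \<in> A"
proof -
  have "reduced n (red g)"
    using g set_red_subset distinct_adj_red reduced_iff_distinct_adj by blast
  then have "wmul (wmul (red g) (red u)) (rev (red g)) \<in> A"
    using normal u by (simp add: normal_subgroup_Z2_def)
  also have "wmul (wmul (red g) (red u)) (rev (red g)) = red (g @ u @ rev g)"
    unfolding wmul_def by (metis append_assoc red_append_red_left red_append_red_right red_rev_red)
  finally show ?thesis .
qed

lemma same_coset_refl: "same_coset A x x"
  by (simp add: same_coset_def Nil_in_A)

lemma same_coset_sym: "same_coset A x y \<Longrightarrow> same_coset A y x"
  using red_rev_in_A by (fastforce simp: same_coset_def)

lemma same_coset_trans: "same_coset A x y \<Longrightarrow> same_coset A y z \<Longrightarrow> same_coset A x z"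
proof -
  assume "same_coset A x y" "same_coset A y z"
  then have "red ((x @ rev y) @ (y @ rev z)) \<in> A"
    unfolding same_coset_def by (rule red_append_in_A)
  also have "red ((x @ rev y) @ (y @ rev z)) = red (x @ red (red (rev y @ y) @ rev z))"
    by (simp only: red_append_red_left red_append_red_right append_assoc)
  finally show ?thesis
    by (simp add: same_coset_def)
qed

lemma same_coset_append:
  assumes "set x \<subseteq> {..<n}" "same_coset A x y" "same_coset A x' y'"
  shows "same_coset A (x @ x') (y @ y')"
proof -
  \<comment> \<open>$x x' y'^{-1} y^{-1} = (x (x' y'^{-1}) x^{-1}) (x y^{-1})$, a product of elements of $A$\<close>
  have "red ((x @ (x' @ rev y') @ rev x) @ (x @ rev y)) \<in> A"
    using assms red_append_in_A red_conj_in_A unfolding same_coset_def by blast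
  also have "red ((x @ (x' @ rev y') @ rev x) @ (x @ rev y)) = red ((x @ x' @ rev y') @ rev y)"
    using red_append_cancel[of "x @ x' @ rev y'" x "rev y"] by simp
  finally show ?thesis
    by (simp add: same_coset_def)
qed

lemma same_coset_red: "same_coset A x (red x)"
proof -
  have "red (x @ rev (red x)) = red (x @ red (rev (red x)))"
    by simp
  also have "\<dots> = []"
    by (simp only: red_rev_red red_append_red_right red_append_rev_self)
  finally show ?thesis
    by (simp add: same_coset_def Nil_in_A)
qed

lemma gcls_eq: "same_coset A x y \<Longrightarrow> gcls n A x = gcls n A y"
  unfolding gcls_def same_coset_def[symmetric]
  using same_coset_sym same_coset_trans by blast

lemma red_in_gcls: "set x \<subseteq> {..<n} \<Longrightarrow> red x \<in> gcls n A x"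
  using same_coset_sym[OF same_coset_red, of x] set_red_subset[of x]
  by (auto simp: gcls_def reduced_iff_distinct_adj distinct_adj_red same_coset_def)

lemma gcls_eq_iff: "set x \<subseteq> {..<n} \<Longrightarrow> gcls n A x = gcls n A y \<longleftrightarrow> same_coset A x y"
proof
  assume "set x \<subseteq> {..<n}" "gcls n A x = gcls n A y"
  then have "red x \<in> gcls n A y"
    using red_in_gcls by blast
  then have "same_coset A (red x) y"
    by (simp add: gcls_def same_coset_def)
  then show "same_coset A x y"
    using same_coset_trans same_coset_red by blast
qed (rule gcls_eq)

lemma cmul_gcls:
  assumes "set x \<subseteq> {..<n}" "set y \<subseteq> {..<n}"
  shows "cmul n A (gcls n A x) (gcls n A y) = gcls n A (x @ y)"
proof -
  define x' where "x' = (SOME v. v \<in> gcls n A x)"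
  define y' where "y' = (SOME v. v \<in> gcls n A y)"
  have "x' \<in> gcls n A x" "y' \<in> gcls n A y"
    unfolding x'_def y'_def using assms red_in_gcls by (meson someI)+
  then have "set x' \<subseteq> {..<n}" "same_coset A x' x" "same_coset A y' y"
    by (simp_all add: gcls_def same_coset_def reduced_def)
  then have "same_coset A (x' @ y') (x @ y)"
    by (rule same_coset_append)
  then show ?thesis
    unfolding cmul_def x'_def[symmetric] y'_def[symmetric] by (rule gcls_eq)
qed

lemma ga_mul_delta: "ga_mul n A (ga_delta a) (ga_delta b) = ga_delta (cmul n A a b)"
proof
  fix c
  have "{d. ga_delta a d \<noteq> 0} = {a}" "{d. ga_delta b d \<noteq> 0} = {b}"
    by (auto simp: ga_delta_def)
  moreover have "{p \<in> {a} \<times> {b}. cmul n A (fst p) (snd p) = c}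
      = (if cmul n A a b = c then {(a, b)} else {})"
    by auto
  ultimately show "ga_mul n A (ga_delta a) (ga_delta b) c = ga_delta (cmul n A a b) c"
    by (simp add: ga_mul_def ga_delta_def)
qed

lemma ga_mul_zero [simp]:
  "ga_mul n A (\<lambda>_. 0) g = (\<lambda>_. 0)"
  "ga_mul n A f (\<lambda>_. 0) = (\<lambda>_. 0)"
  by (simp_all add: ga_mul_def)

lemma utens_conv:
  "length p = length i \<Longrightarrow> set p \<subseteq> {..<n} \<Longrightarrow>
   utens n A p i \<sigma> = (if p = map \<sigma> i then ga_delta (gcls n A p) else (\<lambda>_. 0))"
proof (induction p i rule: list_induct2)
  case (Cons x xs y ys)
  then show ?case
    using cmul_gcls[of "[x]" xs] by (auto simp: qa_mul_def ufund_def ga_mul_delta)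
qed (simp add: qa_one_def)

lemma mult_ga_delta_eq_iff:
  "(\<forall>c. a * ga_delta X c = ga_delta Y c * b) \<longleftrightarrow> a = b \<and> (a \<noteq> 0 \<longrightarrow> X = Y)"
  by (cases "X = Y") (auto simp: ga_delta_def)

lemma intertwining_eq_iff:
  assumes \<sigma>: "\<sigma> permutes {..<n}" and j: "j \<in> tuples n l" and i: "i \<in> tuples n k"
  shows "(\<lambda>c. \<Sum>p\<in>tuples n k. T j p * utens n A p i \<sigma> c)
           = (\<lambda>c. \<Sum>q\<in>tuples n l. utens n A j q \<sigma> c * T q i)
    \<longleftrightarrow> T j (map \<sigma> i) = T (map (inv \<sigma>) j) i
        \<and> (T j (map \<sigma> i) \<noteq> 0 \<longrightarrow> gcls n A (map \<sigma> i) = gcls n A j)"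
proof -
  have "(\<Sum>p\<in>tuples n k. T j p * utens n A p i \<sigma> c)
      = (\<Sum>p\<in>tuples n k. if p = map \<sigma> i then T j p * ga_delta (gcls n A p) c else 0)" for c
    using i by (intro sum.cong refl) (auto simp: utens_conv tuples_def)
  also have "\<dots> c = T j (map \<sigma> i) * ga_delta (gcls n A (map \<sigma> i)) c" for c
    using i \<sigma> by (simp add: finite_tuples map_permutes_in_tuples_iff)
  finally have lhs: "\<And>c. (\<Sum>p\<in>tuples n k. T j p * utens n A p i \<sigma> c)
      = T j (map \<sigma> i) * ga_delta (gcls n A (map \<sigma> i)) c" .
  have "(\<Sum>q\<in>tuples n l. utens n A j q \<sigma> c * T q i)
      = (\<Sum>q\<in>tuples n l. if q = map (inv \<sigma>) j then ga_delta (gcls n A j) c * T q i else 0)" for c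
    using j map_permutes_eq_iff[OF \<sigma>, of _ j]
    by (intro sum.cong refl) (auto simp: utens_conv tuples_def eq_commute[of j])
  also have "\<dots> c = ga_delta (gcls n A j) c * T (map (inv \<sigma>) j) i" for c
    using j permutes_inv[OF \<sigma>] by (simp add: finite_tuples map_permutes_in_tuples_iff)
  finally have rhs: "\<And>c. (\<Sum>q\<in>tuples n l. utens n A j q \<sigma> c * T q i)
      = ga_delta (gcls n A j) c * T (map (inv \<sigma>) j) i" .
  show ?thesis
    unfolding fun_eq_iff lhs rhs by (rule mult_ga_delta_eq_iff)
qed

lemma Mor_iff:
  assumes perms: "\<And>\<sigma>. \<sigma> \<in> H \<Longrightarrow> \<sigma> permutes {..<n}" and id_in_H: "id \<in> H"
  shows "T \<in> Mor n A H k l \<longleftrightarrow> is_map n k l T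
    \<and> (\<forall>\<sigma>\<in>H. \<forall>j i. T (map \<sigma> j) (map \<sigma> i) = T j i)
    \<and> (\<forall>j i. T j i \<noteq> 0 \<longrightarrow> same_coset A i j)"
proof -
  have Mor: "T \<in> Mor n A H k l \<longleftrightarrow> is_map n k l T \<and>
     (\<forall>\<sigma>\<in>H. \<forall>j\<in>tuples n l. \<forall>i\<in>tuples n k. T j (map \<sigma> i) = T (map (inv \<sigma>) j) i
        \<and> (T j (map \<sigma> i) \<noteq> 0 \<longrightarrow> gcls n A (map \<sigma> i) = gcls n A j))"
    unfolding Mor_def using intertwining_eq_iff[OF perms] by simp
  show ?thesis
  proof (intro iffI conjI allI ballI impI)
    assume T: "T \<in> Mor n A H k l"
    then show T_is_map: "is_map n k l T"
      by (simp add: Mor)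
    fix j i
    show "T (map \<sigma> j) (map \<sigma> i) = T j i" if \<sigma>: "\<sigma> \<in> H" for \<sigma>
    proof (cases "j \<in> tuples n l \<and> i \<in> tuples n k")
      case True
      then show ?thesis
        using T \<sigma> map_permutes_in_tuples_iff[OF perms[OF \<sigma>]] map_permutes_eq_iff[OF perms[OF \<sigma>]]
        by (metis Mor)
    next
      case False
      then show ?thesis
        using T_is_map map_permutes_in_tuples_iff[OF perms[OF \<sigma>]] unfolding is_map_def by metis
    qed
    assume nz: "T j i \<noteq> 0"
    then have i: "i \<in> tuples n k" and "j \<in> tuples n l"
      using T_is_map by (auto simp: is_map_def)
    then have "T j (map id i) \<noteq> 0 \<longrightarrow> gcls n A (map id i) = gcls n A j"
      using T id_in_H unfolding Mor by blast
    then have "gcls n A i = gcls n A j"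
      using nz by simp
    then show "same_coset A i j"
      using gcls_eq_iff set_subset_if_in_tuples[OF i] by blast
  next
    assume T: "is_map n k l T \<and> (\<forall>\<sigma>\<in>H. \<forall>j i. T (map \<sigma> j) (map \<sigma> i) = T j i)
      \<and> (\<forall>j i. T j i \<noteq> 0 \<longrightarrow> same_coset A i j)"
    have "T j (map \<sigma> i) = T (map (inv \<sigma>) j) i" if "\<sigma> \<in> H" for \<sigma> j i
      using T that map_permutes_eq_iff[OF perms[OF that]] by metis
    then show "T \<in> Mor n A H k l"
      using T gcls_eq by (simp add: Mor)
  qed
qed

lemma cspan_subset_Mor:
  assumes perms: "\<And>\<sigma>. \<sigma> \<in> H \<Longrightarrow> \<sigma> permutes {..<n}" and id_in_H: "id \<in> H"
    and S: "S \<subseteq> Mor n A H k l"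
  shows "cspan S \<subseteq> Mor n A H k l"
proof
  fix T assume "T \<in> cspan S"
  then obtain F c where F: "finite F" "F \<subseteq> S" and T: "T = (\<lambda>j i. \<Sum>X\<in>F. c X * X j i)"
    by (auto simp: cspan_def)
  have Mor: "X \<in> Mor n A H k l" if "X \<in> F" for X
    using that F S by blast
  have nonzero: "\<exists>X\<in>F. X j i \<noteq> 0" if "T j i \<noteq> 0" for j i
    using that unfolding T by (metis (mono_tags, lifting) mult_zero_right sum.neutral)
  have "is_map n k l T" "\<forall>j i. T j i \<noteq> 0 \<longrightarrow> same_coset A i j"
    using nonzero Mor Mor_iff[OF perms id_in_H] unfolding is_map_def by blast+
  moreover have "\<forall>\<sigma>\<in>H. \<forall>j i. T (map \<sigma> j) (map \<sigma> i) = T j i"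
    unfolding T using Mor Mor_iff[OF perms id_in_H] by (auto intro!: sum.cong)
  ultimately show "T \<in> Mor n A H k l"
    by (simp add: Mor_iff[OF perms id_in_H])
qed

end

section \<open>Injective homomorphisms into $G$\<close>

lemma AutG_permutes: "\<sigma> \<in> AutG n EG \<Longrightarrow> \<sigma> permutes {..<n}"
  by (simp add: AutG_def)

lemma id_in_AutG: "id \<in> AutG n EG"
  by (simp add: AutG_def permutes_id)

lemma AutG_edge_iff: "\<sigma> \<in> AutG n EG \<Longrightarrow> (\<sigma> x, \<sigma> y) \<in> EG \<longleftrightarrow> (x, y) \<in> EG"
  by (simp add: AutG_def)

lemma inv_in_AutG:
  assumes \<sigma>: "\<sigma> \<in> AutG n EG"
  shows "inv \<sigma> \<in> AutG n EG"
proof -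
  have "(x, y) \<in> EG \<longleftrightarrow> (inv \<sigma> x, inv \<sigma> y) \<in> EG" for x y
    using AutG_edge_iff[OF \<sigma>, of "inv \<sigma> x" "inv \<sigma> y"] permutes_inverses(1)[OF AutG_permutes[OF \<sigma>]]
    by simp
  then show ?thesis
    using permutes_inv[OF AutG_permutes[OF \<sigma>]] by (simp add: AutG_def)
qed

definition inj_homs :: "nat \<Rightarrow> (nat \<times> nat) set \<Rightarrow> nat set \<Rightarrow> (nat \<times> nat) set \<Rightarrow> (nat \<Rightarrow> nat) set" where
  "inj_homs n EG V E = {\<phi> \<in> V \<rightarrow>\<^sub>E {..<n}. inj_on \<phi> V \<and> (\<forall>(x, y)\<in>E. (\<phi> x, \<phi> y) \<in> EG)}"

lemma finite_inj_homs: "finite V \<Longrightarrow> finite (inj_homs n EG V E)"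
  by (rule finite_subset[of _ "V \<rightarrow>\<^sub>E {..<n}"]) (auto simp: inj_homs_def finite_PiE)

lemma set_map_inj_homs: "\<phi> \<in> inj_homs n EG V E \<Longrightarrow> set xs \<subseteq> V \<Longrightarrow> set (map \<phi> xs) \<subseteq> {..<n}"
  by (auto simp: inj_homs_def)

lemma hatT_conv_card:
  "hatT n EG K j i = of_nat (card {\<phi> \<in> inj_homs n EG (bverts K) (bedges K).
     map \<phi> (bin K) = i \<and> map \<phi> (bout K) = j})"
  unfolding hatT_def inj_homs_def by (simp add: conj_assoc)

lemma hatT_conv_sum:
  "finite (bverts K) \<Longrightarrow> hatT n EG K j i = (\<Sum>\<phi>\<in>inj_homs n EG (bverts K) (bedges K).
     if map \<phi> (bin K) = i \<and> map \<phi> (bout K) = j then 1 else 0)"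
  unfolding hatT_conv_card by (simp add: sum.If_cases finite_inj_homs Int_def)

lemma inj_homs_precompose:
  assumes \<phi>: "\<phi> \<in> inj_homs n EG V' E'" and h: "h ` V \<subseteq> V'" "inj_on h V"
    and E: "E \<subseteq> V \<times> V" and hE: "\<And>x y. (x, y) \<in> E \<Longrightarrow> (h x, h y) \<in> E'"
  shows "restrict (\<phi> \<circ> h) V \<in> inj_homs n EG V E"
proof -
  have "inj_on (\<phi> \<circ> h) V"
    using \<phi> h by (auto simp: inj_homs_def intro: comp_inj_on inj_on_subset)
  then show ?thesis
    using \<phi> h E hE by (fastforce simp: inj_homs_def inj_on_def)
qed

lemma inj_homs_postcompose_AutG:
  assumes \<sigma>: "\<sigma> \<in> AutG n EG" and E: "E \<subseteq> V \<times> V" and \<phi>: "\<phi> \<in> inj_homs n EG V E"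
  shows "restrict (\<sigma> \<circ> \<phi>) V \<in> inj_homs n EG V E"
proof -
  have "inj_on (\<sigma> \<circ> \<phi>) V"
    using \<phi> permutes_inj[OF AutG_permutes[OF \<sigma>]]
    by (auto simp: inj_homs_def intro: comp_inj_on inj_on_subset)
  then show ?thesis
    using \<phi> E \<sigma> permutes_in_image[OF AutG_permutes[OF \<sigma>]]
    by (fastforce simp: inj_homs_def inj_on_def AutG_def)
qed

lemma map_restrict_comp: "set xs \<subseteq> V \<Longrightarrow> map (restrict (f \<circ> g) V) xs = map f (map g xs)"
  by (auto intro: map_cong)

lemma hatT_AutG_invariant:
  assumes K: "wf_blg K" and \<sigma>: "\<sigma> \<in> AutG n EG"
  shows "hatT n EG K (map \<sigma> j) (map \<sigma> i) = hatT n EG K j i"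
proof -
  let ?V = "bverts K"
  define F where "F j i = {\<phi> \<in> inj_homs n EG ?V (bedges K). map \<phi> (bin K) = i \<and> map \<phi> (bout K) = j}"
    for j i
  have V: "bedges K \<subseteq> ?V \<times> ?V" "set (bin K) \<subseteq> ?V" "set (bout K) \<subseteq> ?V"
    using K by (auto simp: wf_blg_def)
  have into: "(\<lambda>\<phi>. restrict (\<tau> \<circ> \<phi>) ?V) ` F j i \<subseteq> F (map \<tau> j) (map \<tau> i)"
    if "\<tau> \<in> AutG n EG" for \<tau> j i
    using inj_homs_postcompose_AutG[OF that V(1)]
    by (auto simp: F_def map_restrict_comp[OF V(2)] map_restrict_comp[OF V(3)])
  have inv_map: "map (inv \<sigma>) (map \<sigma> xs) = xs" for xs
    using map_permutes_eq_iff[OF AutG_permutes[OF \<sigma>]] by metis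
  have "bij_betw (\<lambda>\<phi>. restrict (\<sigma> \<circ> \<phi>) ?V) (F j i) (F (map \<sigma> j) (map \<sigma> i))"
  proof (rule bij_betw_byWitness[where f'="\<lambda>\<phi>. restrict (inv \<sigma> \<circ> \<phi>) ?V"])
    show "\<forall>\<phi>\<in>F j i. restrict (inv \<sigma> \<circ> restrict (\<sigma> \<circ> \<phi>) ?V) ?V = \<phi>"
      using permutes_inverses(2)[OF AutG_permutes[OF \<sigma>]]
      by (auto simp: F_def inj_homs_def fun_eq_iff PiE_def extensional_def)
    show "\<forall>\<phi>\<in>F (map \<sigma> j) (map \<sigma> i). restrict (\<sigma> \<circ> restrict (inv \<sigma> \<circ> \<phi>) ?V) ?V = \<phi>"
      using permutes_inverses(1)[OF AutG_permutes[OF \<sigma>]]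
      by (auto simp: F_def inj_homs_def fun_eq_iff PiE_def extensional_def)
    show "(\<lambda>\<phi>. restrict (\<sigma> \<circ> \<phi>) ?V) ` F j i \<subseteq> F (map \<sigma> j) (map \<sigma> i)"
      using into[OF \<sigma>] .
    show "(\<lambda>\<phi>. restrict (inv \<sigma> \<circ> \<phi>) ?V) ` F (map \<sigma> j) (map \<sigma> i) \<subseteq> F j i"
      using into[OF inv_in_AutG[OF \<sigma>], of "map \<sigma> j" "map \<sigma> i"] by (simp only: inv_map)
  qed
  then show ?thesis
    unfolding hatT_conv_card F_def[symmetric] by (simp add: bij_betw_same_card)
qed

section \<open>The category of graphs respecting the cosets of $A$\<close>

definition coset_category :: "nat \<Rightarrow> (nat \<times> nat) set \<Rightarrow> nat list set \<Rightarrow> blg set" where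
  "coset_category n EG A = {K. wf_blg K \<and> (\<forall>\<phi>\<in>inj_homs n EG (bverts K) (bedges K).
      same_coset A (map \<phi> (bin K)) (map \<phi> (bout K)))}"

lemma same_coset_pullback:
  assumes K: "K \<in> coset_category n EG A" and \<phi>: "\<phi> \<in> inj_homs n EG V E"
    and h: "h ` bverts K \<subseteq> V" "inj_on h (bverts K)"
    and hE: "\<And>x y. (x, y) \<in> bedges K \<Longrightarrow> (h x, h y) \<in> E"
  shows "same_coset A (map \<phi> (map h (bin K))) (map \<phi> (map h (bout K)))"
proof -
  have wf: "bedges K \<subseteq> bverts K \<times> bverts K" "set (bin K) \<subseteq> bverts K" "set (bout K) \<subseteq> bverts K"
    using K by (auto simp: coset_category_def wf_blg_def)
  have "restrict (\<phi> \<circ> h) (bverts K) \<in> inj_homs n EG (bverts K) (bedges K)"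
    using \<phi> h wf(1) hE by (rule inj_homs_precompose)
  then have "same_coset A (map (restrict (\<phi> \<circ> h) (bverts K)) (bin K))
      (map (restrict (\<phi> \<circ> h) (bverts K)) (bout K))"
    using K unfolding coset_category_def by blast
  then show ?thesis
    by (simp only: map_restrict_comp[OF wf(2)] map_restrict_comp[OF wf(3)])
qed

lemma coset_category_iso:
  assumes K: "K \<in> coset_category n EG A" and L: "wf_blg L" and iso: "blg_iso K L"
  shows "L \<in> coset_category n EG A"
proof -
  obtain \<psi> where \<psi>: "bij_betw \<psi> (bverts K) (bverts L)"
    and edges: "\<forall>x\<in>bverts K. \<forall>y\<in>bverts K. (x, y) \<in> bedges K \<longleftrightarrow> (\<psi> x, \<psi> y) \<in> bedges L"
    and labels: "map \<psi> (bin K) = bin L" "map \<psi> (bout K) = bout L"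
    using iso unfolding blg_iso_def by blast
  have "bedges K \<subseteq> bverts K \<times> bverts K"
    using K by (simp add: coset_category_def wf_blg_def)
  then have "same_coset A (map \<phi> (bin L)) (map \<phi> (bout L))"
    if "\<phi> \<in> inj_homs n EG (bverts L) (bedges L)" for \<phi>
    using same_coset_pullback[OF K that, of \<psi>] \<psi> edges
    unfolding labels bij_betw_def by blast
  then show ?thesis
    using L by (simp add: coset_category_def)
qed

lemma sym_pmap: "sym E \<Longrightarrow> sym (pmap g E)"
  unfolding sym_def pmap_def by auto

lemma wf_blg_glue:
  assumes K: "wf_blg K" and H: "wf_blg H"
    and a: "set a \<subseteq> (\<lambda>x. 2 * x) ` bverts K \<union> g ` bverts H"
    and b: "set b \<subseteq> (\<lambda>x. 2 * x) ` bverts K \<union> g ` bverts H"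
  shows "wf_blg \<lparr>bverts = (\<lambda>x. 2 * x) ` bverts K \<union> g ` bverts H,
    bedges = pmap (\<lambda>x. 2 * x) (bedges K) \<union> pmap g (bedges H), bin = a, bout = b\<rparr>"
  using K H a b sym_pmap[of "bedges K" "\<lambda>x. 2 * x"] sym_pmap[of "bedges H" g]
  by (auto simp: wf_blg_def pmap_def sym_Un)

lemma union_mapH_inj:
  assumes "vertex_overlap K H f"
  shows "inj_on (union_mapH f) (bverts H)"
proof (rule inj_onI)
  fix y y' assume eq: "union_mapH f y = union_mapH f y'"
  have partner: "(SOME x. (x, z) \<in> f, z) \<in> f" if "\<exists>x. (x, z) \<in> f" for z
    using someI_ex[OF that] .
  have unique: "(x, z) \<in> f \<Longrightarrow> (x, z') \<in> f \<Longrightarrow> z = z'" for x z z'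
    using assms unfolding vertex_overlap_def by blast
  \<comment> \<open>identified vertices go to even numbers, the others to odd ones\<close>
  show "y = y'"
    using eq partner[of y] partner[of y'] unique
    by (auto simp: union_mapH_def split: if_splits) presburger+
qed

lemma comp_mapH_bin_nth:
  assumes "y \<in> set (bin H)"
  obtains m where "m < length (bin H)" "bin H ! m = y" "comp_mapH H K y = 2 * (bout K ! m)"
proof -
  have "\<exists>m. m < length (bin H) \<and> bin H ! m = y"
    using assms by (simp add: in_set_conv_nth)
  from someI_ex[OF this] show ?thesis
    using assms that by (auto simp: comp_mapH_def)
qed

lemma map_comp_mapH_bin:
  assumes sp: "same_pattern (bout K) (bin H)"
  shows "map (comp_mapH H K) (bin H) = map (\<lambda>x. 2 * x) (bout K)"
proof (rule nth_equalityI)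
  have len: "length (bout K) = length (bin H)"
    using sp by (simp add: same_pattern_def)
  then show "length (map (comp_mapH H K) (bin H)) = length (map (\<lambda>x. 2 * x) (bout K))"
    by simp
  fix m assume "m < length (map (comp_mapH H K) (bin H))"
  then have m: "m < length (bin H)"
    by simp
  obtain m' where m': "m' < length (bin H)" "bin H ! m' = bin H ! m"
    and "comp_mapH H K (bin H ! m) = 2 * (bout K ! m')"
    using comp_mapH_bin_nth[of "bin H ! m" H K] m by auto
  moreover have "bout K ! m' = bout K ! m"
    using sp m m' len unfolding same_pattern_def by metis
  ultimately show "map (comp_mapH H K) (bin H) ! m = map (\<lambda>x. 2 * x) (bout K) ! m"
    using m len by simp
qed

lemma comp_mapH_inj:
  assumes sp: "same_pattern (bout K) (bin H)"
  shows "inj_on (comp_mapH H K) (bverts H)"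
proof (rule inj_onI)
  fix y y' assume eq: "comp_mapH H K y = comp_mapH H K y'"
  have len: "length (bout K) = length (bin H)"
    using sp by (simp add: same_pattern_def)
  have even: "even (comp_mapH H K z)" if "z \<in> set (bin H)" for z
    using that by (simp add: comp_mapH_def)
  have odd: "comp_mapH H K z = 2 * z + 1" if "z \<notin> set (bin H)" for z
    using that by (simp add: comp_mapH_def)
  show "y = y'"
  proof (cases "y \<in> set (bin H)"; cases "y' \<in> set (bin H)")
    assume "y \<in> set (bin H)" "y' \<in> set (bin H)"
    then obtain m m' where "m < length (bin H)" "bin H ! m = y" "comp_mapH H K y = 2 * (bout K ! m)"
      and "m' < length (bin H)" "bin H ! m' = y'" "comp_mapH H K y' = 2 * (bout K ! m')"
      by (metis comp_mapH_bin_nth)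
    then show ?thesis
      using eq sp len unfolding same_pattern_def by (metis mult_left_cancel zero_neq_numeral)
  next
    assume "y \<in> set (bin H)" "y' \<notin> set (bin H)"
    then show ?thesis
      using eq even[of y] odd[of y'] by simp
  next
    assume "y \<notin> set (bin H)" "y' \<in> set (bin H)"
    then show ?thesis
      using eq even[of y'] odd[of y] by (simp add: eq_commute[of "Suc _"])
  next
    assume "y \<notin> set (bin H)" "y' \<notin> set (bin H)"
    then show ?thesis
      using eq odd by simp
  qed
qed

context Z2_quotient
begin

lemma coset_category_N0: "blg_N0 \<in> coset_category n EG A"
  by (simp add: coset_category_def blg_N0_def wf_blg_def same_coset_refl)

lemma coset_category_M_id: "blg_M_id \<in> coset_category n EG A"
  by (simp add: coset_category_def blg_M_id_def wf_blg_def same_coset_refl)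

lemma coset_category_M_cup: "blg_M_cup \<in> coset_category n EG A"
  by (simp add: coset_category_def blg_M_cup_def wf_blg_def same_coset_def red_Cons Nil_in_A)

lemma coset_category_inv: "K \<in> coset_category n EG A \<Longrightarrow> blg_inv K \<in> coset_category n EG A"
  by (auto simp: coset_category_def blg_inv_def wf_blg_def intro: same_coset_sym)

lemma coset_category_union:
  assumes K: "K \<in> coset_category n EG A" and H: "H \<in> coset_category n EG A"
    and f: "vertex_overlap K H f"
  shows "blg_union K f H \<in> coset_category n EG A"
proof -
  let ?U = "blg_union K f H"
  have wf: "wf_blg K" "wf_blg H"
    using K H by (simp_all add: coset_category_def)
  then have "wf_blg ?U"
    unfolding blg_union_def by (intro wf_blg_glue) (auto simp: wf_blg_def)
  moreover have "same_coset A (map \<phi> (bin ?U)) (map \<phi> (bout ?U))"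
    if \<phi>: "\<phi> \<in> inj_homs n EG (bverts ?U) (bedges ?U)" for \<phi>
  proof -
    have "same_coset A (map \<phi> (map (\<lambda>x. 2 * x) (bin K))) (map \<phi> (map (\<lambda>x. 2 * x) (bout K)))"
      by (rule same_coset_pullback[OF K \<phi>]) (auto simp: blg_union_def pmap_def inj_on_def)
    moreover have "same_coset A (map \<phi> (map (union_mapH f) (bin H))) (map \<phi> (map (union_mapH f) (bout H)))"
      using union_mapH_inj[OF f]
      by (intro same_coset_pullback[OF H \<phi>]) (auto simp: blg_union_def pmap_def)
    moreover have "set (map \<phi> (map (\<lambda>x. 2 * x) (bin K))) \<subseteq> {..<n}"
      using wf(1) by (intro set_map_inj_homs[OF \<phi>]) (auto simp: blg_union_def wf_blg_def)
    ultimately show ?thesis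
      by (simp add: blg_union_def same_coset_append)
  qed
  ultimately show ?thesis
    by (simp add: coset_category_def)
qed

lemma coset_category_comp:
  assumes K: "K \<in> coset_category n EG A" and H: "H \<in> coset_category n EG A"
    and sp: "same_pattern (bout K) (bin H)"
  shows "blg_comp H K \<in> coset_category n EG A"
proof -
  let ?U = "blg_comp H K"
  have wf: "wf_blg K" "wf_blg H"
    using K H by (simp_all add: coset_category_def)
  then have "wf_blg ?U"
    unfolding blg_comp_def by (intro wf_blg_glue) (auto simp: wf_blg_def)
  moreover have "same_coset A (map \<phi> (bin ?U)) (map \<phi> (bout ?U))"
    if \<phi>: "\<phi> \<in> inj_homs n EG (bverts ?U) (bedges ?U)" for \<phi>
  proof -
    have "same_coset A (map \<phi> (map (\<lambda>x. 2 * x) (bin K))) (map \<phi> (map (\<lambda>x. 2 * x) (bout K)))"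
      by (rule same_coset_pullback[OF K \<phi>]) (auto simp: blg_comp_def pmap_def inj_on_def)
    moreover have "same_coset A (map \<phi> (map (comp_mapH H K) (bin H))) (map \<phi> (map (comp_mapH H K) (bout H)))"
      using comp_mapH_inj[OF sp]
      by (intro same_coset_pullback[OF H \<phi>]) (auto simp: blg_comp_def pmap_def)
    ultimately show ?thesis
      by (simp add: blg_comp_def map_comp_mapH_bin[OF sp] same_coset_trans)
  qed
  ultimately show ?thesis
    by (simp add: coset_category_def)
qed

lemma skew_graph_category_coset_category: "skew_graph_category (coset_category n EG A)"
  unfolding skew_graph_category_def
  using coset_category_iso coset_category_N0 coset_category_M_id coset_category_M_cup
    coset_category_union coset_category_inv coset_category_comp
  by (auto simp: coset_category_def)

end

section \<open>The category spans the intertwiner spaces\<close>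

lemma sum_in_cspan:
  assumes I: "finite I" and g: "\<And>x. x \<in> I \<Longrightarrow> g x \<in> S"
  shows "(\<lambda>j i. \<Sum>x\<in>I. a x * g x j i) \<in> cspan S"
proof -
  define c where "c X = (\<Sum>x\<in>{x\<in>I. g x = X}. a x)" for X
  have "(\<Sum>x\<in>I. a x * g x j i) = (\<Sum>X\<in>g ` I. \<Sum>x\<in>{x\<in>I. g x = X}. a x * g x j i)" for j i
    using I by (rule sum.image_gen)
  also have "\<dots> j i = (\<Sum>X\<in>g ` I. c X * X j i)" for j i
    unfolding c_def sum_distrib_right by (intro sum.cong refl) auto
  finally show ?thesis
    unfolding cspan_def using I g by (intro CollectI exI[of _ "g ` I"] exI[of _ c]) auto
qed

lemma inj_endo_hom_extends_to_AutG:
  assumes EG: "EG \<subseteq> {..<n} \<times> {..<n}" and \<phi>: "\<phi> \<in> inj_homs n EG {..<n} EG"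
  obtains \<sigma> where "\<sigma> \<in> AutG n EG" and "\<And>xs. set xs \<subseteq> {..<n} \<Longrightarrow> map \<phi> xs = map \<sigma> xs"
proof -
  define \<sigma> where "\<sigma> = (\<lambda>x. if x < n then \<phi> x else x)"
  have "inj_on \<phi> {..<n}" "\<phi> ` {..<n} \<subseteq> {..<n}"
    using \<phi> by (auto simp: inj_homs_def)
  then have "bij_betw \<phi> {..<n} {..<n}"
    by (simp add: bij_betw_def endo_inj_surj)
  then have "bij_betw \<sigma> {..<n} {..<n}"
    by (rule bij_betw_cong[THEN iffD1, rotated]) (simp add: \<sigma>_def)
  then have perm: "\<sigma> permutes {..<n}"
    by (rule bij_imp_permutes) (simp add: \<sigma>_def)
  define f where "f = (\<lambda>(x, y). (\<sigma> x, \<sigma> y))"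
  have "inj f"
    using permutes_inj[OF perm] by (auto simp: f_def inj_def)
  \<comment> \<open>an injective self-map of the finite edge set is onto, so non-edges go to non-edges\<close>
  moreover have "f ` EG = EG"
  proof (rule card_subset_eq)
    show "finite EG"
      using EG finite_subset by blast
    show "f ` EG \<subseteq> EG"
      using \<phi> EG by (fastforce simp: f_def \<sigma>_def inj_homs_def)
    show "card (f ` EG) = card EG"
      using \<open>inj f\<close> by (simp add: card_image inj_on_subset)
  qed
  ultimately have "(x, y) \<in> EG \<longleftrightarrow> (\<sigma> x, \<sigma> y) \<in> EG" for x y
    using inj_image_mem_iff[of f "(x, y)" EG] by (simp add: f_def)
  then have "\<sigma> \<in> AutG n EG"
    using perm by (simp add: AutG_def)
  then show thesis
    by (rule that) (auto simp: \<sigma>_def intro: map_cong)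
qed

definition labelled_graph :: "nat \<Rightarrow> (nat \<times> nat) set \<Rightarrow> nat list \<Rightarrow> nat list \<Rightarrow> blg" where
  "labelled_graph n EG j i = \<lparr>bverts = {..<n}, bedges = EG, bin = i, bout = j\<rparr>"

lemma sum_tuple_pairs_map_permutes:
  assumes \<sigma>: "\<sigma> permutes {..<n}"
  shows "(\<Sum>x\<in>tuples n l \<times> tuples n k.
      if map \<sigma> (snd x) = i \<and> map \<sigma> (fst x) = j then f (fst x) (snd x) else 0)
    = (if j \<in> tuples n l \<and> i \<in> tuples n k then f (map (inv \<sigma>) j) (map (inv \<sigma>) i) else 0)"
proof -
  have "map \<sigma> (snd x) = i \<and> map \<sigma> (fst x) = j \<longleftrightarrow> x = (map (inv \<sigma>) j, map (inv \<sigma>) i)" for x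
    using map_permutes_eq_iff[OF \<sigma>] by (cases x) auto
  then show ?thesis
    using map_permutes_in_tuples_iff[OF permutes_inv[OF \<sigma>]]
    by (simp add: finite_tuples sum.delta' mem_Times_iff)
qed

locale Z2_quotient_graph = Z2_quotient +
  fixes EG :: "(nat \<times> nat) set"
  assumes EG_subset: "EG \<subseteq> {..<n} \<times> {..<n}" and sym_EG: "sym EG"
    and invariant: "invariant_under (AutG n EG) A"
begin

lemmas Mor_AutG_iff = Mor_iff[OF AutG_permutes id_in_AutG]

lemma hatT_in_Mor:
  assumes K: "K \<in> coset_category n EG A" and k: "length (bin K) = k" and l: "length (bout K) = l"
  shows "hatT n EG K \<in> Mor n A (AutG n EG) k l"
proof -
  have wf: "wf_blg K"
    using K by (simp add: coset_category_def)
  have witness: "\<exists>\<phi>\<in>inj_homs n EG (bverts K) (bedges K). map \<phi> (bin K) = i \<and> map \<phi> (bout K) = j"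
    if "hatT n EG K j i \<noteq> 0" for j i
    using that unfolding hatT_conv_card by (metis (mono_tags, lifting) card.empty empty_Collect_eq of_nat_0)
  have "j \<in> tuples n l \<and> i \<in> tuples n k" if "hatT n EG K j i \<noteq> 0" for j i
    using witness[OF that] wf k l set_map_inj_homs by (fastforce simp: tuples_def wf_blg_def)
  moreover have "same_coset A i j" if "hatT n EG K j i \<noteq> 0" for j i
    using witness[OF that] K by (auto simp: coset_category_def)
  ultimately show ?thesis
    using hatT_AutG_invariant[OF wf] by (simp add: Mor_AutG_iff is_map_def)
qed

lemma same_coset_map_AutG:
  assumes "same_coset A x y" and \<sigma>: "\<sigma> \<in> AutG n EG"
  shows "same_coset A (map \<sigma> x) (map \<sigma> y)"
proof -
  have "red (map \<sigma> x @ rev (map \<sigma> y)) = map \<sigma> (red (x @ rev y))"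
    using red_map_inj[OF permutes_inj[OF AutG_permutes[OF \<sigma>]], of "x @ rev y"] by (simp add: rev_map)
  then show ?thesis
    using assms invariant by (simp add: same_coset_def invariant_under_def)
qed

lemma labelled_graph_in_coset_category:
  assumes j: "j \<in> tuples n l" and i: "i \<in> tuples n k" and coset: "same_coset A i j"
  shows "labelled_graph n EG j i \<in> coset_category n EG A"
proof -
  have "same_coset A (map \<phi> i) (map \<phi> j)" if \<phi>: "\<phi> \<in> inj_homs n EG {..<n} EG" for \<phi>
  proof -
    obtain \<sigma> where \<sigma>: "\<sigma> \<in> AutG n EG" and "map \<phi> i = map \<sigma> i" "map \<phi> j = map \<sigma> j"
      using inj_endo_hom_extends_to_AutG[OF EG_subset \<phi>] i j set_subset_if_in_tuples by metis
    then show ?thesis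
      using same_coset_map_AutG[OF coset \<sigma>] by (simp only:)
  qed
  moreover have "wf_blg (labelled_graph n EG j i)"
    using i j EG_subset sym_EG by (auto simp: labelled_graph_def wf_blg_def tuples_def)
  ultimately show ?thesis
    by (simp add: coset_category_def labelled_graph_def)
qed

lemma sum_fibre_inj_endo_hom:
  assumes T_is_map: "is_map n k l T"
    and T_invariant: "\<And>\<sigma> j i. \<sigma> \<in> AutG n EG \<Longrightarrow> T (map \<sigma> j) (map \<sigma> i) = T j i"
    and \<phi>: "\<phi> \<in> inj_homs n EG {..<n} EG"
  shows "(\<Sum>x\<in>tuples n l \<times> tuples n k.
      if map \<phi> (snd x) = i \<and> map \<phi> (fst x) = j then T (fst x) (snd x) else 0) = T j i"
proof -
  obtain \<sigma> where \<sigma>: "\<sigma> \<in> AutG n EG" and agree: "\<And>xs. set xs \<subseteq> {..<n} \<Longrightarrow> map \<phi> xs = map \<sigma> xs"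
    using inj_endo_hom_extends_to_AutG[OF EG_subset \<phi>] by blast
  have "(\<Sum>x\<in>tuples n l \<times> tuples n k.
      if map \<phi> (snd x) = i \<and> map \<phi> (fst x) = j then T (fst x) (snd x) else 0)
    = (\<Sum>x\<in>tuples n l \<times> tuples n k.
      if map \<sigma> (snd x) = i \<and> map \<sigma> (fst x) = j then T (fst x) (snd x) else 0)"
    using agree by (intro sum.cong) (auto simp: tuples_def)
  also have "\<dots> = (if j \<in> tuples n l \<and> i \<in> tuples n k then T (map (inv \<sigma>) j) (map (inv \<sigma>) i) else 0)"
    by (rule sum_tuple_pairs_map_permutes[OF AutG_permutes[OF \<sigma>]])
  also have "\<dots> = T j i"
    using T_is_map T_invariant[OF inv_in_AutG[OF \<sigma>], of j i] by (auto simp: is_map_def)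
  finally show ?thesis .
qed

lemma AutG_invariant_expansion:
  assumes T_is_map: "is_map n k l T"
    and T_invariant: "\<And>\<sigma> j i. \<sigma> \<in> AutG n EG \<Longrightarrow> T (map \<sigma> j) (map \<sigma> i) = T j i"
  shows "T j i = (\<Sum>x\<in>tuples n l \<times> tuples n k. T (fst x) (snd x)
    / of_nat (card (inj_homs n EG {..<n} EG)) * hatT n EG (labelled_graph n EG (fst x) (snd x)) j i)"
proof -
  define E where "E = inj_homs n EG {..<n} EG"
  let ?P = "tuples n l \<times> tuples n k"
  have "restrict id {..<n} \<in> E"
    using EG_subset by (auto simp: E_def inj_homs_def)
  then have card: "card E > 0"
    unfolding E_def using finite_inj_homs card_gt_0_iff by blast
  have hatT_labelled_graph: "hatT n EG (labelled_graph n EG j' i') j i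
      = (\<Sum>\<phi>\<in>E. if map \<phi> i' = i \<and> map \<phi> j' = j then 1 else 0)" for j' i'
    unfolding E_def by (simp add: hatT_conv_sum labelled_graph_def)
  have "(\<Sum>x\<in>?P. T (fst x) (snd x) / of_nat (card E) * hatT n EG (labelled_graph n EG (fst x) (snd x)) j i)
      = (\<Sum>x\<in>?P. \<Sum>\<phi>\<in>E. if map \<phi> (snd x) = i \<and> map \<phi> (fst x) = j
                          then T (fst x) (snd x) / of_nat (card E) else 0)"
    unfolding hatT_labelled_graph sum_distrib_left by (intro sum.cong refl) simp
  also have "\<dots> = (\<Sum>\<phi>\<in>E. \<Sum>x\<in>?P. if map \<phi> (snd x) = i \<and> map \<phi> (fst x) = j
                          then T (fst x) (snd x) / of_nat (card E) else 0)"
    by (rule sum.swap)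
  also have "\<dots> = (\<Sum>\<phi>\<in>E. (\<Sum>x\<in>?P. if map \<phi> (snd x) = i \<and> map \<phi> (fst x) = j
                          then T (fst x) (snd x) else 0) / of_nat (card E))"
    unfolding sum_divide_distrib by (intro sum.cong refl) simp
  also have "\<dots> = (\<Sum>\<phi>\<in>E. T j i / of_nat (card E))"
    using sum_fibre_inj_endo_hom[OF T_is_map T_invariant] by (simp add: E_def)
  also have "\<dots> = T j i"
    using card by simp
  finally show ?thesis
    unfolding E_def ..
qed

lemma Mor_subset_graphC: "Mor n A (AutG n EG) k l \<subseteq> graphC n EG (coset_category n EG A) k l"
proof
  fix T assume "T \<in> Mor n A (AutG n EG) k l"
  then have T_is_map: "is_map n k l T"
    and T_invariant: "\<And>\<sigma> j i. \<sigma> \<in> AutG n EG \<Longrightarrow> T (map \<sigma> j) (map \<sigma> i) = T j i"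
    and T_support: "\<And>j i. T j i \<noteq> 0 \<Longrightarrow> same_coset A i j"
    by (simp_all add: Mor_AutG_iff)
  define I where "I = {x \<in> tuples n l \<times> tuples n k. T (fst x) (snd x) \<noteq> 0}"
  define a where "a x = T (fst x) (snd x) / of_nat (card (inj_homs n EG {..<n} EG))" for x
  define g where "g x = hatT n EG (labelled_graph n EG (fst x) (snd x))" for x
  have "T j i = (\<Sum>x\<in>I. a x * g x j i)" for j i
  proof -
    have "T j i = (\<Sum>x\<in>tuples n l \<times> tuples n k. a x * g x j i)"
      using AutG_invariant_expansion[OF T_is_map T_invariant, of j i] by (simp only: a_def g_def)
    also have "\<dots> = (\<Sum>x\<in>I. a x * g x j i)"
      by (rule sum.mono_neutral_right) (auto simp: I_def a_def finite_tuples)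
    finally show ?thesis .
  qed
  then have T: "T = (\<lambda>j i. \<Sum>x\<in>I. a x * g x j i)"
    by (simp add: fun_eq_iff)
  have "g x \<in> {hatT n EG K | K. K \<in> coset_category n EG A \<and> length (bin K) = k \<and> length (bout K) = l}"
    if "x \<in> I" for x
  proof -
    obtain j i where x: "x = (j, i)" and j: "j \<in> tuples n l" and i: "i \<in> tuples n k" and "T j i \<noteq> 0"
      using \<open>x \<in> I\<close> by (auto simp: I_def)
    then have "labelled_graph n EG j i \<in> coset_category n EG A"
      using labelled_graph_in_coset_category T_support by blast
    moreover have "length (bin (labelled_graph n EG j i)) = k" "length (bout (labelled_graph n EG j i)) = l"
      using i j by (simp_all add: labelled_graph_def tuples_def)
    ultimately show ?thesis
      unfolding g_def x by auto
  qed
  moreover have "finite I"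
    by (simp add: I_def finite_tuples)
  ultimately show "T \<in> graphC n EG (coset_category n EG A) k l"
    unfolding graphC_def T by (intro sum_in_cspan)
qed

lemma graphC_coset_category: "graphC n EG (coset_category n EG A) k l = Mor n A (AutG n EG) k l"
proof
  show "graphC n EG (coset_category n EG A) k l \<subseteq> Mor n A (AutG n EG) k l"
    unfolding graphC_def by (intro cspan_subset_Mor[OF AutG_permutes id_in_AutG]) (auto intro: hatT_in_Mor)
qed (rule Mor_subset_graphC)

end

theorem proposition5p1:
  fixes n :: nat and EG :: "(nat \<times> nat) set" and A :: "nat list set"
  assumes "EG \<subseteq> {..<n} \<times> {..<n}" and "sym EG"
    and "normal_subgroup_Z2 n A" and "invariant_under (AutG n EG) A"
  shows "\<exists>C. skew_graph_category C \<and>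
           (\<forall>k l. graphC n EG C k l = Mor n A (AutG n EG) k l)"
proof -
  interpret Z2_quotient_graph n A EG
    using assms by unfold_locales
  show ?thesis
    using skew_graph_category_coset_category graphC_coset_category by blast
qed

end
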